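(* Let $\lambda$ be a partition of $n$ and let $\lambda(\cdot)$ denote Young's orthogonal representation of $S_n$ on the space with orthonormal basis $\{\ket{T}\}$ indexed by standard Young tableaux $T$ of shape $\lambda$. Let $A=\{a_1,\dots,a_k\}\subseteq\{1,\dots,n\}$ be a set of consecutive integers, let $S_A\le S_n$ be the symmetric group permuting the elements of $A$ (fixing all others), and let $\lambda(S_A)=\sum_{\pi\in S_A}\lambda(\pi)$. If $T$ is a standard Young tableau of shape $\lambda$ containing two elements of $A$ in the same column, then $\lambda(S_A)\ket{T}=0$.
   Context: A standard Young tableau (SYT) of shape $\lambda\vdash n$ is a filling of the Young diagram of $\lambda$ with $1,\dots,n$, each used once, strictly increasing along rows (left to right) and down columns. Young's orthogonal representation is determined by the action of adjacent transpositions $(k,k+1)$ on SYTs: if $k$ and $k+1$ lie in the same row of $T$, then $(k,k+1)\ket{T}=\ket{T}$; if they lie in the same column, $(k,k+1)\ket{T}=-\ket{T}$; otherwise $(k,k+1)\ket{T}=a\ket{T}+\sqrt{1-a^2}\,\ket{(k,k+1)T}$ and $(k,k+1)\ket{(k,k+1)T}=\sqrt{1-a^2}\,\ket{T}-a\ket{(k,k+1)T}$, where $(k,k+1)T$ is the SYT obtained from $T$ by swapping the entries $k$ and $k+1$, and $a$ is the reciprocal of the axial distance in $T$ between the box containing $k$ and the box containing $k+1$ (the signed number of steps: up steps plus right steps minus left steps minus down steps, from the box of $k$ to the box of $k+1$). *)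

theory Defs
  imports Complex_Main "HOL-Combinatorics.Combinatorics"
begin

text \<open>A partition of n: a weakly decreasing list of positive naturals summing to n.
  Boxes of the Young diagram are pairs (row, column), 0-indexed, row 0 on top.\<close>

definition is_partition :: "nat list \<Rightarrow> nat \<Rightarrow> bool" where
  "is_partition lam n \<longleftrightarrow> sorted (rev lam) \<and> 0 \<notin> set lam \<and> sum_list lam = n"

definition diagram :: "nat list \<Rightarrow> (nat \<times> nat) set" where
  "diagram lam = {(i, j). i < length lam \<and> j < lam ! i}"

type_synonym tableau = "nat \<times> nat \<Rightarrow> nat"

text \<open>Standard Young tableau of shape lam: a bijection from the diagram onto
  {1..n}, strictly increasing along rows and down columns; value 0 outside the diagram
  (normalisation so that tableaux are uniquely represented).\<close>

definition is_syt :: "nat list \<Rightarrow> tableau \<Rightarrow> bool" where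
  "is_syt lam T \<longleftrightarrow>
     bij_betw T (diagram lam) {1..sum_list lam} \<and>
     (\<forall>b. b \<notin> diagram lam \<longrightarrow> T b = 0) \<and>
     (\<forall>i j j'. (i, j') \<in> diagram lam \<longrightarrow> j < j' \<longrightarrow> T (i, j) < T (i, j')) \<and>
     (\<forall>i i' j. (i', j) \<in> diagram lam \<longrightarrow> i < i' \<longrightarrow> T (i, j) < T (i', j))"

definition syt :: "nat list \<Rightarrow> tableau set" where
  "syt lam = {T. is_syt lam T}"

definition box :: "nat list \<Rightarrow> tableau \<Rightarrow> nat \<Rightarrow> nat \<times> nat" where
  "box lam T x = (THE b. b \<in> diagram lam \<and> T b = x)"

definition swap_entries :: "nat \<Rightarrow> tableau \<Rightarrow> tableau" where
  "swap_entries k T = transpose k (k + 1) \<circ> T"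

definition ket :: "tableau \<Rightarrow> tableau \<Rightarrow> real" where
  "ket T = (\<lambda>U. if U = T then 1 else 0)"

definition axial_dist :: "nat list \<Rightarrow> tableau \<Rightarrow> nat \<Rightarrow> int" where
  "axial_dist lam T k =
     (let (r1, c1) = box lam T k; (r2, c2) = box lam T (k + 1)
      in (int c2 - int c1) + (int r1 - int r2))"

text \<open>Action of the adjacent transposition (k,k+1) on the basis vector |T>.
  (The rule for |(k,k+1)T> is the same rule applied to (k,k+1)T, whose axial
  distance is the negative of that of T.)\<close>
definition adj_basis :: "nat list \<Rightarrow> nat \<Rightarrow> tableau \<Rightarrow> (tableau \<Rightarrow> real)" where
  "adj_basis lam k T =
     (let (r1, c1) = box lam T k; (r2, c2) = box lam T (k + 1) in
      if r1 = r2 then ket T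
      else if c1 = c2 then (\<lambda>U. - ket T U)
      else (let a = 1 / real_of_int (axial_dist lam T k) in
            (\<lambda>U. a * ket T U + sqrt (1 - a\<^sup>2) * ket (swap_entries k T) U)))"

definition adj_op :: "nat list \<Rightarrow> nat \<Rightarrow> (tableau \<Rightarrow> real) \<Rightarrow> (tableau \<Rightarrow> real)" where
  "adj_op lam k v = (\<lambda>U. \<Sum>T\<in>syt lam. v T * adj_basis lam k T U)"

definition rep_space :: "nat list \<Rightarrow> (tableau \<Rightarrow> real) set" where
  "rep_space lam = {v. \<forall>U. U \<notin> syt lam \<longrightarrow> v U = 0}"

text \<open>rho is Young's orthogonal representation of S_n (n = |lam|): a homomorphism from
  the permutations of {1..n} to operators on the representation space, acting on
  adjacent transpositions by the rules above (this determines it uniquely).\<close>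
definition young_orth_rep ::
  "nat list \<Rightarrow> ((nat \<Rightarrow> nat) \<Rightarrow> (tableau \<Rightarrow> real) \<Rightarrow> (tableau \<Rightarrow> real)) \<Rightarrow> bool" where
  "young_orth_rep lam rho \<longleftrightarrow>
     (\<forall>\<sigma> \<tau> v. \<sigma> permutes {1..sum_list lam} \<longrightarrow> \<tau> permutes {1..sum_list lam} \<longrightarrow>
        v \<in> rep_space lam \<longrightarrow> rho (\<sigma> \<circ> \<tau>) v = rho \<sigma> (rho \<tau> v)) \<and>
     (\<forall>k v. 1 \<le> k \<longrightarrow> k < sum_list lam \<longrightarrow> v \<in> rep_space lam \<longrightarrow>
        rho (transpose k (k + 1)) v = adj_op lam k v)"

end

theory Submission
  imports Defs
begin

text \<open>
  Write P for the symmetrizer of S_A. For w, w+1 \<in> A the transposition (w, w+1) lies in S_A,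
  so P (w, w+1) = P and hence P|U> = P (w, w+1)|U> for every tableau U.
  Let x < y be the entries of two vertically adjacent boxes (i, j), (i+1, j) with x, y \<in> A
  (they exist because A is an interval and columns increase); all of x, ..., y lie in A.
  If y = x + 1, then (x, x+1)|U> = -|U>, so P|U> = -P|U> = 0.
  Otherwise some w with x \<le> w < y lies weakly north-east of (i, j) while w+1 lies
  south-west of (i+1, j), in a different row and column. The axial distance d from w to w+1
  is negative, and P|U> = (1/d) P|U> + c P|U'> where U' swaps w and w+1.
  U' has the same property, with a larger entry sum over the north-east quadrant of (i, j),
  so P|U'> = 0 by induction, and P|U> = 0 because 1/d \<noteq> 1.
\<close>

lemma finite_diagram: "finite (diagram lam)"
proof (rule finite_subset)
  show "diagram lam \<subseteq> {..<length lam} \<times> {..<sum_list lam}"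
    using elem_le_sum_list by (fastforce simp: diagram_def)
qed auto

lemma finite_syt: "finite (syt lam)"
proof (rule finite_subset)
  show "syt lam \<subseteq> {f. \<forall>b. (b \<in> diagram lam \<longrightarrow> f b \<in> {1..sum_list lam}) \<and>
                          (b \<notin> diagram lam \<longrightarrow> f b = 0)}"
    by (auto simp: syt_def is_syt_def bij_betw_def)
  show "finite \<dots>"
    by (rule finite_set_of_finite_funs) (use finite_diagram in auto)
qed

lemma is_syt_row_less:
  "is_syt lam U \<Longrightarrow> (i, j') \<in> diagram lam \<Longrightarrow> j < j' \<Longrightarrow> U (i, j) < U (i, j')"
  by (simp add: is_syt_def)

lemma is_syt_col_less:
  "is_syt lam U \<Longrightarrow> (i', j) \<in> diagram lam \<Longrightarrow> i < i' \<Longrightarrow> U (i, j) < U (i', j)"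
  by (simp add: is_syt_def)

lemma is_syt_col_le:
  "is_syt lam U \<Longrightarrow> (i', j) \<in> diagram lam \<Longrightarrow> i \<le> i' \<Longrightarrow> U (i, j) \<le> U (i', j)"
  using is_syt_col_less[of lam U i' j i] by (cases "i = i'") auto

lemma is_syt_range: "is_syt lam U \<Longrightarrow> b \<in> diagram lam \<Longrightarrow> U b \<in> {1..sum_list lam}"
  by (auto simp: is_syt_def bij_betw_def)

lemma is_syt_nonzero_in_diagram:
  assumes "is_syt lam U" "U b \<noteq> 0"
  shows "b \<in> diagram lam"
proof (rule ccontr)
  assume "b \<notin> diagram lam"
  with assms(1) have "U b = 0" by (cases b) (simp add: is_syt_def)
  with assms(2) show False by contradiction
qed

lemma box_entry:
  assumes "is_syt lam U" "b \<in> diagram lam"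
  shows "box lam U (U b) = b"
  unfolding box_def
proof (rule the_equality)
  fix b' assume "b' \<in> diagram lam \<and> U b' = U b"
  then show "b' = b" using assms unfolding is_syt_def bij_betw_def inj_on_def by blast
qed (use assms(2) in simp)

lemma box_in_diagram:
  assumes "is_syt lam U" "x \<in> {1..sum_list lam}"
  shows "box lam U x \<in> diagram lam" "U (box lam U x) = x"
proof -
  obtain b where "b \<in> diagram lam" "U b = x"
    using assms unfolding is_syt_def bij_betw_def by (metis imageE)
  then show "box lam U x \<in> diagram lam" "U (box lam U x) = x"
    using box_entry[OF assms(1)] by metis+
qed

lemma is_syt_swap_entries:
  assumes U: "is_syt lam U" and k: "1 \<le> k" "k < sum_list lam"
    and rows: "fst (box lam U k) \<noteq> fst (box lam U (k + 1))"
    and cols: "snd (box lam U k) \<noteq> snd (box lam U (k + 1))"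
  shows "is_syt lam (swap_entries k U)"
proof -
  let ?t = "transpose k (k + 1)"
  have "?t permutes {1..sum_list lam}"
    using k by (intro permutes_swap_id) auto
  then have bij: "bij_betw (?t \<circ> U) (diagram lam) {1..sum_list lam}"
    using U permutes_imp_bij by (blast intro: bij_betw_trans[of U] dest: is_syt_def[THEN iffD1])
  have zero: "\<forall>b. b \<notin> diagram lam \<longrightarrow> (?t \<circ> U) b = 0"
    using U k by (auto simp: is_syt_def transpose_def)
  \<comment> \<open>?t reverses the order of the entries k, k+1 only, and these share no row or column.\<close>
  have mono: "(?t \<circ> U) b < (?t \<circ> U) b'"
    if "U b < U b'" "b' \<in> diagram lam" "fst b = fst b' \<or> snd b = snd b'" for b b'
  proof -
    have "\<not> (U b = k \<and> U b' = k + 1)"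
      using that(2,3) box_entry[OF U] is_syt_nonzero_in_diagram[OF U] k(1) rows cols
      by (metis not_one_le_zero)
    then show ?thesis using that(1) by (auto simp: transpose_def)
  qed
  have "\<forall>i j j'. (i, j') \<in> diagram lam \<longrightarrow> j < j' \<longrightarrow> (?t \<circ> U) (i, j) < (?t \<circ> U) (i, j')"
    using mono is_syt_row_less[OF U] by simp
  moreover have "\<forall>i i' j. (i', j) \<in> diagram lam \<longrightarrow> i < i' \<longrightarrow> (?t \<circ> U) (i, j) < (?t \<circ> U) (i', j)"
    using mono is_syt_col_less[OF U] by simp
  ultimately show ?thesis
    unfolding is_syt_def swap_entries_def using bij zero by blast
qed

lemma ket_in_rep_space: "U \<in> syt lam \<Longrightarrow> ket U \<in> rep_space lam"
  by (auto simp: rep_space_def ket_def)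

lemma adj_op_ket:
  assumes "U \<in> syt lam"
  shows "adj_op lam k (ket U) = adj_basis lam k U"
proof
  fix X
  have "adj_op lam k (ket U) X = (\<Sum>T\<in>syt lam. if T = U then adj_basis lam k T X else 0)"
    unfolding adj_op_def ket_def by (intro sum.cong) auto
  also have "\<dots> = adj_basis lam k U X"
    using assms finite_syt by (simp add: sum.delta')
  finally show "adj_op lam k (ket U) X = adj_basis lam k U X" .
qed

lemma adj_basis_same_column:
  assumes "box lam U k = (r, c)" "box lam U (k + 1) = (r', c)" "r \<noteq> r'"
  shows "adj_basis lam k U = (\<lambda>X. - ket U X)"
  using assms by (simp add: adj_basis_def)

lemma adj_basis_distinct_row_column:
  assumes "box lam U k = (r, c)" "box lam U (k + 1) = (r', c')" "r \<noteq> r'" "c \<noteq> c'"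
  defines "a \<equiv> 1 / real_of_int (axial_dist lam U k)"
  shows "adj_basis lam k U = (\<lambda>X. a * ket U X + sqrt (1 - a\<^sup>2) * ket (swap_entries k U) X)"
  using assms by (simp add: adj_basis_def Let_def)

lemma adj_basis_notin_syt:
  assumes T: "T \<in> syt lam" and U: "U \<notin> syt lam" and k: "1 \<le> k" "k < sum_list lam"
  shows "adj_basis lam k T U = 0"
proof -
  obtain r c r' c' where b: "box lam T k = (r, c)" "box lam T (k + 1) = (r', c')"
    by (metis prod.exhaust)
  have "swap_entries k T \<in> syt lam" if "r \<noteq> r'" "c \<noteq> c'"
    using is_syt_swap_entries[of lam T k] T k b that by (auto simp: syt_def)
  then show ?thesis
    using T U unfolding adj_basis_def b Let_def ket_def by auto
qed

definition rep_endo :: "nat list \<Rightarrow> ((tableau \<Rightarrow> real) \<Rightarrow> (tableau \<Rightarrow> real)) \<Rightarrow> bool" where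
  "rep_endo lam f \<longleftrightarrow>
     (\<forall>v \<in> rep_space lam. f v \<in> rep_space lam) \<and>
     (\<forall>v w a c. v \<in> rep_space lam \<longrightarrow> w \<in> rep_space lam \<longrightarrow>
        f (\<lambda>X. a * v X + c * w X) = (\<lambda>X. a * f v X + c * f w X))"

lemma rep_space_lincomb:
  "v \<in> rep_space lam \<Longrightarrow> w \<in> rep_space lam \<Longrightarrow> (\<lambda>X. a * v X + c * w X) \<in> rep_space lam"
  by (auto simp: rep_space_def)

lemma rep_endo_adj_op:
  assumes "1 \<le> k" "k < sum_list lam"
  shows "rep_endo lam (adj_op lam k)"
proof -
  have "adj_op lam k v \<in> rep_space lam" for v
    unfolding rep_space_def adj_op_def using adj_basis_notin_syt[OF _ _ assms] by auto
  moreover have "adj_op lam k (\<lambda>X. a * v X + c * w X) =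
                 (\<lambda>X. a * adj_op lam k v X + c * adj_op lam k w X)" for v w a c
    unfolding adj_op_def
    by (auto simp: sum_distrib_left sum.distrib algebra_simps intro!: sum.cong)
  ultimately show ?thesis by (simp add: rep_endo_def)
qed

lemma rep_endo_comp:
  assumes "rep_endo lam f" "rep_endo lam g"
  shows "rep_endo lam (f \<circ> g)"
  using assms rep_space_lincomb unfolding rep_endo_def by simp

lemma permutes_induct_adjacent_transpositions [consumes 2, case_names adj comp]:
  fixes N :: nat
  assumes \<sigma>: "\<sigma> permutes {1..N}" and N: "2 \<le> N"
    and adj: "\<And>k. 1 \<le> k \<Longrightarrow> k < N \<Longrightarrow> P (transpose k (k + 1))"
    and comp: "\<And>\<sigma> \<tau>. \<sigma> permutes {1..N} \<Longrightarrow> \<tau> permutes {1..N} \<Longrightarrow> P \<sigma> \<Longrightarrow> P \<tau> \<Longrightarrow> P (\<sigma> \<circ> \<tau>)"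
  shows "P \<sigma>"
proof -
  have t12: "transpose 1 (1 + 1) permutes {1..N}"
    using N by (intro permutes_swap_id) auto
  have "P (transpose 1 (1 + 1) \<circ> transpose 1 (1 + 1))"
    using comp[OF t12 t12] adj[of 1] N by simp
  then have P_id: "P id" by simp
  have P_seq: "P (apply_adj_transps xs)" if "set xs \<subseteq> {1..<N}" for xs
    using that
  proof (induction xs)
    case (Cons k xs)
    have "transpose k (k + 1) permutes {1..N}" "apply_adj_transps xs permutes {1..N}"
      using Cons.prems by (auto intro!: permutes_swap_id permutes_apply_adj_transps)
    moreover have "P (transpose k (k + 1))"
      using Cons.prems by (intro adj) auto
    moreover have "P (apply_adj_transps xs)"
      using Cons.IH Cons.prems by simp
    ultimately show ?case
      unfolding apply_adj_transps_Cons by (rule comp)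
  qed (simp add: P_id)
  have P_transp: "P (transpose a b)" if "a \<in> {1..N}" "b \<in> {1..N}" "a < b" for a b
    using P_seq[of "adj_transp_seq a b"] that
    by (simp add: adj_transp_seq_correct set_adj_transp_seq)
  show ?thesis
    using \<sigma> finite_atLeastAtMost
  proof (induction rule: permutes_induct)
    case (swap a b p)
    have "P (transpose a b)"
    proof (cases "a < b")
      case True
      then show ?thesis using swap(1,2) by (rule P_transp[rotated 2])
    next
      case False
      then have "b < a" using swap(3) by simp
      then have "P (transpose b a)" using swap(2,1) by (rule P_transp[rotated 2])
      then show ?thesis by (simp only: transpose_commute)
    qed
    then show ?case
      using swap(5) permutes_swap_id[OF swap(1,2)] swap(4) by (rule comp[rotated 2])
  qed (rule P_id)
qed

lemma rep_endo_young_orth_rep: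
  assumes Y: "young_orth_rep lam rho" and N: "2 \<le> sum_list lam"
    and \<sigma>: "\<sigma> permutes {1..sum_list lam}"
  shows "rep_endo lam (rho \<sigma>)"
  using \<sigma> N
proof (induction rule: permutes_induct_adjacent_transpositions)
  case (adj k)
  then show ?case
    using Y rep_endo_adj_op[OF adj] rep_space_lincomb unfolding young_orth_rep_def rep_endo_def by simp
next
  case (comp \<sigma> \<tau>)
  have "rep_endo lam (rho \<sigma> \<circ> rho \<tau>)"
    using comp.IH by (rule rep_endo_comp)
  moreover have "v \<in> rep_space lam \<Longrightarrow> rho (\<sigma> \<circ> \<tau>) v = (rho \<sigma> \<circ> rho \<tau>) v" for v
    using Y comp.hyps unfolding young_orth_rep_def by simp
  ultimately show ?case
    using rep_space_lincomb unfolding rep_endo_def by simp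
qed

definition symmetrizer :: "nat set \<Rightarrow> ((nat \<Rightarrow> nat) \<Rightarrow> (tableau \<Rightarrow> real) \<Rightarrow> (tableau \<Rightarrow> real))
    \<Rightarrow> (tableau \<Rightarrow> real) \<Rightarrow> (tableau \<Rightarrow> real)" where
  "symmetrizer A rho v = (\<lambda>X. \<Sum>\<pi> \<in> {\<pi>. \<pi> permutes A}. rho \<pi> v X)"

lemma symmetrizer_lincomb:
  assumes Y: "young_orth_rep lam rho" and N: "2 \<le> sum_list lam" and A: "A \<subseteq> {1..sum_list lam}"
    and v: "v \<in> rep_space lam" and w: "w \<in> rep_space lam"
  shows "symmetrizer A rho (\<lambda>X. a * v X + c * w X) =
         (\<lambda>X. a * symmetrizer A rho v X + c * symmetrizer A rho w X)"
proof -
  have "rho \<pi> (\<lambda>X. a * v X + c * w X) = (\<lambda>X. a * rho \<pi> v X + c * rho \<pi> w X)"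
    if "\<pi> permutes A" for \<pi>
    using rep_endo_young_orth_rep[OF Y N permutes_subset[OF that A]] v w
    unfolding rep_endo_def by blast
  then show ?thesis
    unfolding symmetrizer_def by (simp add: sum.distrib sum_distrib_left)
qed

lemma symmetrizer_adj_op:
  assumes Y: "young_orth_rep lam rho" and A: "A \<subseteq> {1..sum_list lam}"
    and w: "w \<in> A" "w + 1 \<in> A" and v: "v \<in> rep_space lam"
  shows "symmetrizer A rho (adj_op lam w v) = symmetrizer A rho v"
proof -
  let ?s = "transpose w (w + 1)"
  have sA: "?s permutes A"
    using w by (intro permutes_swap_id)
  have "1 \<le> w" "w < sum_list lam"
    using w A by auto
  then have "adj_op lam w v = rho ?s v"
    using Y v unfolding young_orth_rep_def by simp
  then have "rho \<pi> (adj_op lam w v) = rho (\<pi> \<circ> ?s) v" if "\<pi> permutes A" for \<pi>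
    using Y v permutes_subset[OF that A] permutes_subset[OF sA A]
    unfolding young_orth_rep_def by simp
  then have "symmetrizer A rho (adj_op lam w v) =
             (\<lambda>X. \<Sum>\<pi> \<in> {\<pi>. \<pi> permutes A}. rho (\<pi> \<circ> ?s) v X)"
    unfolding symmetrizer_def by simp
  also have "\<dots> = symmetrizer A rho v"
    unfolding symmetrizer_def
    by (rule ext, rule sum.reindex_bij_witness[where i="\<lambda>\<pi>. \<pi> \<circ> ?s" and j="\<lambda>\<pi>. \<pi> \<circ> ?s"])
       (auto simp: comp_assoc intro: permutes_compose[OF sA[simplified]])
  finally show ?thesis .
qed

lemma symmetrizer_ket_adj_basis:
  assumes Y: "young_orth_rep lam rho" and A: "A \<subseteq> {1..sum_list lam}"
    and w: "w \<in> A" "w + 1 \<in> A" and U: "U \<in> syt lam"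
  shows "symmetrizer A rho (ket U) = symmetrizer A rho (adj_basis lam w U)"
  using symmetrizer_adj_op[OF Y A w ket_in_rep_space[OF U]] adj_op_ket[OF U] by simp

lemma symmetrizer_ket_same_column:
  assumes Y: "young_orth_rep lam rho" and A: "A \<subseteq> {1..sum_list lam}"
    and w: "w \<in> A" "w + 1 \<in> A" and U: "is_syt lam U"
    and boxes: "box lam U w = (r, c)" "box lam U (w + 1) = (r', c)" "r \<noteq> r'"
  shows "symmetrizer A rho (ket U) = (\<lambda>_. 0)"
proof -
  have U': "U \<in> syt lam"
    using U by (simp add: syt_def)
  have N: "2 \<le> sum_list lam"
    using subsetD[OF A w(1)] subsetD[OF A w(2)] by simp
  have "symmetrizer A rho (ket U) = symmetrizer A rho (\<lambda>X. - ket U X)"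
    using symmetrizer_ket_adj_basis[OF Y A w U'] adj_basis_same_column[OF boxes] by simp
  also have "(\<lambda>X. - ket U X) = (\<lambda>X. (-1) * ket U X + 0 * ket U X)"
    by simp
  also have "symmetrizer A rho \<dots> =
             (\<lambda>X. (-1) * symmetrizer A rho (ket U) X + 0 * symmetrizer A rho (ket U) X)"
    using N ket_in_rep_space[OF U'] by (intro symmetrizer_lincomb[OF Y _ A])
  finally have "symmetrizer A rho (ket U) X = - symmetrizer A rho (ket U) X" for X
    by (simp add: fun_eq_iff)
  then show ?thesis
    by (simp add: fun_eq_iff)
qed

lemma symmetrizer_ket_swap_step:
  assumes Y: "young_orth_rep lam rho" and A: "A \<subseteq> {1..sum_list lam}"
    and w: "w \<in> A" "w + 1 \<in> A" and U: "is_syt lam U"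
    and boxes: "box lam U w = (r, c)" "box lam U (w + 1) = (r', c')" "r < r'" "c' < c"
    and swapped: "symmetrizer A rho (ket (swap_entries w U)) = (\<lambda>_. 0)"
  shows "symmetrizer A rho (ket U) = (\<lambda>_. 0)"
proof -
  define a where "a = 1 / real_of_int (axial_dist lam U w)"
  have "axial_dist lam U w < 0"
    using boxes by (simp add: axial_dist_def)
  then have a: "a < 0"
    unfolding a_def by simp
  have N: "2 \<le> sum_list lam"
    using subsetD[OF A w(1)] subsetD[OF A w(2)] by simp
  have U': "U \<in> syt lam" "swap_entries w U \<in> syt lam"
    using U is_syt_swap_entries[OF U] subsetD[OF A w(1)] subsetD[OF A w(2)] boxes
    by (auto simp: syt_def)
  have "symmetrizer A rho (ket U) =
        symmetrizer A rho (\<lambda>X. a * ket U X + sqrt (1 - a\<^sup>2) * ket (swap_entries w U) X)"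
    using symmetrizer_ket_adj_basis[OF Y A w U'(1)] adj_basis_distinct_row_column[of lam U w r c r' c'] boxes
    unfolding a_def by simp
  also have "\<dots> = (\<lambda>X. a * symmetrizer A rho (ket U) X)"
    using symmetrizer_lincomb[OF Y N A ket_in_rep_space[OF U'(1)] ket_in_rep_space[OF U'(2)]] swapped
    by simp
  finally have "(1 - a) * symmetrizer A rho (ket U) X = 0" for X
    by (auto simp: fun_eq_iff left_diff_distrib)
  then show ?thesis
    using a by (simp add: fun_eq_iff)
qed

lemma ex_exit_step:
  fixes a b :: nat
  assumes "P a" "\<not> P b" "a \<le> b"
  shows "\<exists>w. a \<le> w \<and> w < b \<and> P w \<and> \<not> P (w + 1)"
  using assms(3,2)
proof (induction b rule: dec_induct)
  case base
  then show ?case using assms(1) by simp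
next
  case (step n)
  then show ?case
    by (cases "P n") (auto intro: less_SucI)
qed

lemma is_syt_between_column_pair:
  assumes U: "is_syt lam U" and D: "(i, j) \<in> diagram lam" "(Suc i, j) \<in> diagram lam"
    and b: "(r, c) \<in> diagram lam" "U (i, j) \<le> U (r, c)" "U (r, c) \<le> U (Suc i, j)"
  shows "r \<le> i \<Longrightarrow> j \<le> c" and "i < r \<Longrightarrow> c \<le> j"
proof -
  assume "r \<le> i"
  show "j \<le> c"
  proof (rule ccontr)
    assume "\<not> j \<le> c"
    then have "U (i, c) < U (i, j)"
      using is_syt_row_less[OF U D(1)] by simp
    moreover have "(i, c) \<in> diagram lam"
      using D(1) \<open>\<not> j \<le> c\<close> by (auto simp: diagram_def)
    then have "U (r, c) \<le> U (i, c)"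
      using is_syt_col_le[OF U] \<open>r \<le> i\<close> by blast
    ultimately show False using b(2) by simp
  qed
next
  assume "i < r"
  show "c \<le> j"
  proof (rule ccontr)
    assume "\<not> c \<le> j"
    then have "U (r, j) < U (r, c)"
      using is_syt_row_less[OF U b(1)] by simp
    moreover have "(r, j) \<in> diagram lam"
      using b(1) \<open>\<not> c \<le> j\<close> by (auto simp: diagram_def)
    then have "U (Suc i, j) \<le> U (r, j)"
      using is_syt_col_le[OF U] \<open>i < r\<close> by (simp add: Suc_le_eq)
    ultimately show False using b(3) by simp
  qed
qed

definition northeast :: "nat list \<Rightarrow> nat \<Rightarrow> nat \<Rightarrow> (nat \<times> nat) set" where
  "northeast lam i j = {b \<in> diagram lam. fst b \<le> i \<and> j \<le> snd b}"

lemma column_pair_descent: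
  assumes U: "is_syt lam U" and D: "(i, j) \<in> diagram lam" "(Suc i, j) \<in> diagram lam"
    and gap: "U (i, j) + 1 < U (Suc i, j)"
  obtains w r c r' c' where "U (i, j) \<le> w" "w < U (Suc i, j)"
    "(r, c) \<in> northeast lam i j" "U (r, c) = w"
    "(r', c') \<in> diagram lam" "U (r', c') = w + 1" "i < r'" "c' < c"
proof -
  let ?x = "U (i, j)" and ?y = "U (Suc i, j)"
  have boxes: "box lam U v \<in> diagram lam" "U (box lam U v) = v" if "?x \<le> v" "v \<le> ?y" for v
    using box_in_diagram[OF U] is_syt_range[OF U] D that by (meson atLeastAtMost_iff order_trans)+
  obtain w where w: "?x \<le> w" "w < ?y" "fst (box lam U w) \<le> i" "\<not> fst (box lam U (w + 1)) \<le> i"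
    using ex_exit_step[of "\<lambda>v. fst (box lam U v) \<le> i" ?x ?y] box_entry[OF U] D gap by auto
  obtain r c r' c' where rc: "box lam U w = (r, c)" "box lam U (w + 1) = (r', c')"
    by (metis prod.exhaust)
  have in_diagram: "(r, c) \<in> diagram lam" "(r', c') \<in> diagram lam"
    and entries: "U (r, c) = w" "U (r', c') = w + 1"
    using boxes[of w] boxes[of "w + 1"] w rc by auto
  have "r \<le> i" "i < r'"
    using w rc by auto
  have "j \<le> c" "c' \<le> j"
    using is_syt_between_column_pair[OF U D] in_diagram entries w \<open>r \<le> i\<close> \<open>i < r'\<close> by auto
  moreover have "c' \<noteq> c"
  proof
    assume "c' = c"
    with \<open>j \<le> c\<close> \<open>c' \<le> j\<close> have "c = j" "c' = j" by auto
    have "r = i"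
      using is_syt_col_less[OF U D(1), of r] \<open>r \<le> i\<close> entries w(1) \<open>c = j\<close> by fastforce
    moreover have "r' = Suc i"
      using is_syt_col_less[OF U in_diagram(2), of "Suc i"] \<open>i < r'\<close> entries w(2) \<open>c' = j\<close>
      by (cases "r' = Suc i") auto
    ultimately show False
      using entries \<open>c = j\<close> \<open>c' = j\<close> gap by simp
  qed
  ultimately show thesis
    using that w in_diagram entries \<open>r \<le> i\<close> \<open>i < r'\<close> by (auto simp: northeast_def)
qed

lemma sum_northeast_swap_entries:
  assumes U: "is_syt lam U"
    and inside: "(r, c) \<in> northeast lam i j" "U (r, c) = w"
    and outside: "(r', c') \<in> diagram lam - northeast lam i j" "U (r', c') = w + 1"
  shows "(\<Sum>b \<in> northeast lam i j. swap_entries w U b) = (\<Sum>b \<in> northeast lam i j. U b) + 1"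
proof -
  let ?R = "northeast lam i j"
  have fin: "finite ?R"
    using finite_diagram by (simp add: northeast_def)
  have "swap_entries w U b = U b" if "b \<in> ?R - {(r, c)}" for b
  proof -
    have "b \<in> diagram lam" "(r, c) \<in> diagram lam"
      using that inside by (auto simp: northeast_def)
    then have "U b \<noteq> w" "U b \<noteq> w + 1"
      using that inside outside box_entry[OF U] by (metis DiffD1 DiffD2 singletonI)+
    then show ?thesis
      by (simp add: swap_entries_def transpose_def)
  qed
  then have "(\<Sum>b \<in> ?R - {(r, c)}. swap_entries w U b) = (\<Sum>b \<in> ?R - {(r, c)}. U b)"
    by (rule sum.cong[OF refl])
  moreover have "swap_entries w U (r, c) = U (r, c) + 1"
    using inside by (simp add: swap_entries_def)
  ultimately show ?thesis
    using sum.remove[OF fin inside(1), of U] sum.remove[OF fin inside(1), of "swap_entries w U"]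
    by simp
qed

lemma sum_northeast_le:
  assumes "is_syt lam U"
  shows "(\<Sum>b \<in> northeast lam i j. U b) \<le> card (northeast lam i j) * sum_list lam"
  using sum_bounded_above[of "northeast lam i j" U "sum_list lam"] is_syt_range[OF assms]
  by (fastforce simp: northeast_def)

lemma symmetrizer_ket_column_pair:
  assumes Y: "young_orth_rep lam rho" and A: "A \<subseteq> {1..sum_list lam}" "A = {a..b}"
    and D: "(i, j) \<in> diagram lam" "(Suc i, j) \<in> diagram lam"
    and U: "is_syt lam U" and entries: "U (i, j) \<in> A" "U (Suc i, j) \<in> A"
  shows "symmetrizer A rho (ket U) = (\<lambda>_. 0)"
  using U entries
proof (induction "card (northeast lam i j) * sum_list lam - (\<Sum>b \<in> northeast lam i j. U b)"
    arbitrary: U rule: less_induct)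
  case less
  note U = less.prems(1)
  let ?x = "U (i, j)" and ?y = "U (Suc i, j)"
  have between: "v \<in> A" if "?x \<le> v" "v \<le> ?y" for v
    using that less.prems(2,3) A(2) by auto
  have "?x < ?y"
    using is_syt_col_less[OF U D(2)] by simp
  then consider "?y = ?x + 1" | "?x + 1 < ?y"
    by linarith
  then show ?case
  proof cases
    case 1
    have "?x \<in> A" "?x + 1 \<in> A"
      using between 1 by auto
    moreover have "box lam U ?x = (i, j)" "box lam U (?x + 1) = (Suc i, j)"
      using box_entry[OF U D(1)] box_entry[OF U D(2)] 1 by simp_all
    ultimately show ?thesis
      using symmetrizer_ket_same_column[OF Y A(1) _ _ U] n_not_Suc_n by blast
  next
    case 2
    then obtain w r c r' c' where w: "?x \<le> w" "w < ?y"
      and inside: "(r, c) \<in> northeast lam i j" "U (r, c) = w"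
      and outside: "(r', c') \<in> diagram lam" "U (r', c') = w + 1" "i < r'" "c' < c"
      by (rule column_pair_descent[OF U D])
    let ?U' = "swap_entries w U"
    have wA: "w \<in> A" "w + 1 \<in> A"
      using between w by auto
    have "r \<le> i" "(r, c) \<in> diagram lam"
      using inside by (auto simp: northeast_def)
    then have boxes: "box lam U w = (r, c)" "box lam U (w + 1) = (r', c')" "r < r'"
      using box_entry[OF U \<open>(r, c) \<in> diagram lam\<close>] box_entry[OF U outside(1)]
        inside(2) outside(2,3) by simp_all
    have U': "is_syt lam ?U'"
      using is_syt_swap_entries[OF U] subsetD[OF A(1) wA(1)] subsetD[OF A(1) wA(2)] boxes outside
      by simp
    have "(r', c') \<in> diagram lam - northeast lam i j"
      using outside by (simp add: northeast_def)
    then have "(\<Sum>b \<in> northeast lam i j. ?U' b) = (\<Sum>b \<in> northeast lam i j. U b) + 1"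
      using sum_northeast_swap_entries[OF U inside] outside(2) by blast
    then have decrease: "card (northeast lam i j) * sum_list lam - (\<Sum>b \<in> northeast lam i j. ?U' b)
             < card (northeast lam i j) * sum_list lam - (\<Sum>b \<in> northeast lam i j. U b)"
      using sum_northeast_le[OF U', of i j] by linarith
    have "?U' (i, j) \<in> A" "?U' (Suc i, j) \<in> A"
      using less.prems(2,3) wA by (auto simp: swap_entries_def transpose_def)
    then have "symmetrizer A rho (ket ?U') = (\<lambda>_. 0)"
      using less.hyps[OF decrease U'] by blast
    then show ?thesis
      using symmetrizer_ket_swap_step[OF Y A(1) wA U boxes outside(4)] by blast
  qed
qed

lemma diagram_column_closed:
  assumes "is_partition lam n" "(i', j) \<in> diagram lam" "i \<le> i'"
  shows "(i, j) \<in> diagram lam"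
proof -
  have "sorted (rev lam)"
    using assms(1) by (simp add: is_partition_def)
  then have "lam ! i' \<le> lam ! i"
    using sorted_rev_nth_mono assms(2,3) by (auto simp: diagram_def)
  then show ?thesis
    using assms(2,3) by (auto simp: diagram_def)
qed

theorem lemma1:
  fixes lam :: "nat list" and n :: nat and A :: "nat set" and T :: tableau
    and rho :: "(nat \<Rightarrow> nat) \<Rightarrow> (tableau \<Rightarrow> real) \<Rightarrow> (tableau \<Rightarrow> real)"
  assumes "is_partition lam n"
    and "young_orth_rep lam rho"
    and "A \<subseteq> {1..n}"
    and "\<exists>a b. A = {a..b}"
    and "T \<in> syt lam"
    and "\<exists>i i' j. (i, j) \<in> diagram lam \<and> (i', j) \<in> diagram lam \<and> i \<noteq> i'
                 \<and> T (i, j) \<in> A \<and> T (i', j) \<in> A"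
  shows "\<forall>U. (\<Sum>\<pi> \<in> {\<pi>. \<pi> permutes A}. rho \<pi> (ket T) U) = 0"
proof -
  have n: "n = sum_list lam" and T: "is_syt lam T"
    using assms(1,5) by (auto simp: is_partition_def syt_def)
  obtain a b where A: "A = {a..b}"
    using assms(4) by blast
  obtain i i' j where D: "(i, j) \<in> diagram lam" "(i', j) \<in> diagram lam" "i < i'"
    and entries: "T (i, j) \<in> A" "T (i', j) \<in> A"
    using assms(6) by (metis linorder_neqE_nat)
  have D': "(Suc i, j) \<in> diagram lam"
    using diagram_column_closed[OF assms(1) D(2)] D(3) by simp
  have "T (i, j) \<le> T (Suc i, j)" "T (Suc i, j) \<le> T (i', j)"
    using is_syt_col_le[OF T D'] is_syt_col_le[OF T D(2)] D(3) by auto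
  then have "T (Suc i, j) \<in> A"
    using entries A by auto
  then have "symmetrizer A rho (ket T) = (\<lambda>_. 0)"
    using symmetrizer_ket_column_pair[OF assms(2) _ A D(1) D' T entries(1)] assms(3) n by simp
  then show ?thesis
    by (simp add: symmetrizer_def fun_eq_iff)
qed

end
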